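(* Let $d\ge1$, $m\ge1$, $\nu\ge2$ be integers, $\Lambda\subset\mathbb Z^d$ finite, containing $\mathbf 0$ and symmetric, $\boldsymbol\Sigma=\{\Sigma_{\mathbf k}\}_{\mathbf k\in\Lambda}$ with $\Sigma_{-\mathbf k}=\Sigma_{\mathbf k}^*\in\mathbb C^{m\times m}$, and $\Psi$ an $m\times m$ matrix-valued function on $\mathbb T^d$ with rational entries which is bounded and coercive. Then the dual function $$J_\nu(\mathbf Q)=\langle\mathbf Q,\boldsymbol\Sigma\rangle+\frac{\nu}{\nu-1}\int_{\mathbb T^d}\operatorname{tr}\Big\{\big[\Psi^{-1}(\Psi^{-1}+\tfrac1\nu Q)^{-1}\big]^{\nu-1}\Big\}\,\mathrm d\mu$$ is lower-semicontinuous on $\mathscr L_+$.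
   Context: $\mathbb T^d=(-\pi,\pi]^d$, $\mathrm d\mu=(2\pi)^{-d}\prod_j\mathrm d\theta_j$; bounded and coercive means $aI_m\le\Psi\le bI_m$ on $\mathbb T^d$ for some $b>a>0$. For $\mathbf Q=\{Q_{\mathbf k}\}_{\mathbf k\in\Lambda}$, $Q_{\mathbf k}\in\mathbb C^{m\times m}$, $Q_{-\mathbf k}=Q_{\mathbf k}^*$: $Q(e^{i\boldsymbol\theta})=\sum_{\mathbf k}Q_{\mathbf k}e^{-i\langle\mathbf k,\boldsymbol\theta\rangle}$, $\langle\mathbf Q,\boldsymbol\Sigma\rangle=\sum_{\mathbf k}\operatorname{tr}(Q_{\mathbf k}\Sigma_{\mathbf k}^* )$. $\mathscr L_+=\{\mathbf Q:\nu\Psi^{-1}+Q\ge0\text{ on }\mathbb T^d,\ \text{not identically zero}\}$, a subset of the finite-dimensional real vector space of such $\mathbf Q$. Where $\Psi^{-1}+\frac1\nu Q$ is singular somewhere, the integral is over the complement of the Lebesgue-null set where $\det(\nu\Psi^{-1}+Q)=0$, and $J_\nu$ may take the value $+\infty$. *)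

theory Defs
  imports "HOL-Analysis.Analysis"
begin

definition cadj :: "complex^'n^'m \<Rightarrow> complex^'m^'n" where
  "cadj A = (\<chi> i j. cnj (A $ j $ i))"

definition hermitian :: "complex^'n^'n \<Rightarrow> bool" where
  "hermitian A \<longleftrightarrow> cadj A = A"

definition psd :: "complex^'n^'n \<Rightarrow> bool" where
  "psd A \<longleftrightarrow> hermitian A \<and>
     (\<forall>x::complex^'n. 0 \<le> Re (\<Sum>i\<in>UNIV. \<Sum>j\<in>UNIV. cnj (x $ i) * A $ i $ j * x $ j))"

definition loewner_le :: "complex^'n^'n \<Rightarrow> complex^'n^'n \<Rightarrow> bool" where
  "loewner_le A B \<longleftrightarrow> psd (B - A)"

fun mpow :: "complex^'n^'n \<Rightarrow> nat \<Rightarrow> complex^'n^'n" where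
  "mpow A 0 = mat 1"
| "mpow A (Suc n) = A ** mpow A n"

definition kdot :: "int^'d \<Rightarrow> real^'d \<Rightarrow> real" where
  "kdot k \<theta> = (\<Sum>j\<in>UNIV. real_of_int (k $ j) * \<theta> $ j)"

definition torus :: "(real^'d) set" where
  "torus = {\<theta>. \<forall>j. - pi < \<theta> $ j \<and> \<theta> $ j \<le> pi}"

definition trig_poly :: "(real^'d \<Rightarrow> complex) \<Rightarrow> bool" where
  "trig_poly p \<longleftrightarrow> (\<exists>(F::(int^'d) set) c. finite F \<and>
      (\<forall>\<theta>. p \<theta> = (\<Sum>k\<in>F. c k * exp (\<i> * complex_of_real (kdot k \<theta>)))))"

(* a scalar function on T^d is rational: a ratio p/q of polynomials in
   e^{i theta_j} (equivalently of trigonometric polynomials), q not identically zero *)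
definition rational_on_torus :: "(real^'d \<Rightarrow> complex) \<Rightarrow> bool" where
  "rational_on_torus f \<longleftrightarrow> (\<exists>p q. trig_poly p \<and> trig_poly q \<and>
      (\<exists>\<theta>\<in>torus. q \<theta> \<noteq> 0) \<and>
      (\<forall>\<theta>\<in>torus. q \<theta> \<noteq> 0 \<longrightarrow> f \<theta> = p \<theta> / q \<theta>))"

definition rational_matrix_fun :: "(real^'d \<Rightarrow> complex^'m^'m) \<Rightarrow> bool" where
  "rational_matrix_fun \<Psi> \<longleftrightarrow> (\<forall>i j. rational_on_torus (\<lambda>\<theta>. \<Psi> \<theta> $ i $ j))"

definition bounded_coercive :: "(real^'d \<Rightarrow> complex^'m^'m) \<Rightarrow> bool" where
  "bounded_coercive \<Psi> \<longleftrightarrow> (\<exists>a b::real. 0 < a \<and> a < b \<and>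
      (\<forall>\<theta>\<in>torus. loewner_le (a *\<^sub>R mat 1) (\<Psi> \<theta>) \<and> loewner_le (\<Psi> \<theta>) (b *\<^sub>R mat 1)))"

definition cscale :: "complex \<Rightarrow> complex^'n^'m \<Rightarrow> complex^'n^'m" where
  "cscale c A = (\<chi> i j. c * A $ i $ j)"

definition Qfun :: "(int^'d) set \<Rightarrow> (int^'d \<Rightarrow> complex^'m^'m) \<Rightarrow> real^'d \<Rightarrow> complex^'m^'m" where
  "Qfun \<Lambda> Q \<theta> = (\<Sum>k\<in>\<Lambda>. cscale (exp (- \<i> * complex_of_real (kdot k \<theta>))) (Q k))"

definition herm_family :: "(int^'d) set \<Rightarrow> (int^'d \<Rightarrow> complex^'m^'m) \<Rightarrow> bool" where
  "herm_family \<Lambda> Q \<longleftrightarrow> (\<forall>k\<in>\<Lambda>. Q (- k) = cadj (Q k))"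

(* <Q, Sigma> = sum_k tr(Q_k Sigma_k^* ) (real for Hermitian families) *)
definition pairing :: "(int^'d) set \<Rightarrow> (int^'d \<Rightarrow> complex^'m^'m) \<Rightarrow> (int^'d \<Rightarrow> complex^'m^'m) \<Rightarrow> real" where
  "pairing \<Lambda> Q \<Sigma> = Re (\<Sum>k\<in>\<Lambda>. trace (Q k ** cadj (\<Sigma> k)))"

definition Lplus :: "nat \<Rightarrow> (int^'d) set \<Rightarrow> (real^'d \<Rightarrow> complex^'m^'m) \<Rightarrow> (int^'d \<Rightarrow> complex^'m^'m) set" where
  "Lplus \<nu> \<Lambda> \<Psi> = {Q. herm_family \<Lambda> Q \<and>
      (\<forall>\<theta>\<in>torus. psd (real \<nu> *\<^sub>R matrix_inv (\<Psi> \<theta>) + Qfun \<Lambda> Q \<theta>)) \<and>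
      (\<exists>\<theta>\<in>torus. real \<nu> *\<^sub>R matrix_inv (\<Psi> \<theta>) + Qfun \<Lambda> Q \<theta> \<noteq> 0)}"

(* the integrand, set to 0 on the null set where Psi^{-1} + Q/nu is singular;
   includes the normalisation (2 pi)^{-d} of d mu *)
definition Jintegrand :: "nat \<Rightarrow> (int^'d) set \<Rightarrow> (real^'d \<Rightarrow> complex^'m^'m) \<Rightarrow> (int^'d \<Rightarrow> complex^'m^'m) \<Rightarrow> real^'d \<Rightarrow> real" where
  "Jintegrand \<nu> \<Lambda> \<Psi> Q \<theta> =
     (let M = matrix_inv (\<Psi> \<theta>) + (1 / real \<nu>) *\<^sub>R Qfun \<Lambda> Q \<theta> in
      if det M = 0 then 0
      else (1 / (2 * pi) ^ CARD('d)) *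
           Re (trace (mpow (matrix_inv (\<Psi> \<theta>) ** matrix_inv M) (\<nu> - 1))))"

definition Jnu :: "nat \<Rightarrow> (int^'d) set \<Rightarrow> (int^'d \<Rightarrow> complex^'m^'m) \<Rightarrow> (real^'d \<Rightarrow> complex^'m^'m) \<Rightarrow> (int^'d \<Rightarrow> complex^'m^'m) \<Rightarrow> ereal" where
  "Jnu \<nu> \<Lambda> \<Sigma> \<Psi> Q = ereal (pairing \<Lambda> Q \<Sigma>) +
     ereal (real \<nu> / (real \<nu> - 1)) *
     enn2ereal (\<integral>\<^sup>+ \<theta>. ennreal (Jintegrand \<nu> \<Lambda> \<Psi> Q \<theta>) * indicator torus \<theta> \<partial>lborel)"

end

theory Submission
  imports Defs "HOL-Computational_Algebra.Polynomial"
begin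

(* Lower semicontinuity comes from Fatou's lemma. For fixed theta the integrand is continuous in Q
   wherever Psi^{-1} + Q/nu is invertible (by Cramer's rule inversion is continuous there), and it
   is 0 by definition where that matrix is singular; after clipping to [0, oo] it is therefore
   pointwise lower semicontinuous, while the pairing <Q, Sigma> is continuous. Rationality of Psi is
   only used for measurability: Psi agrees with a Borel function off the zero sets of its
   denominators, and the zero set of a nonzero trigonometric polynomial is null because along lines
   whose direction separates its frequencies it becomes a nonzero polynomial in e^{it} times a unit. *)

section \<open>Continuity and measurability of matrix operations\<close>

lemma tendsto_matrix_matrix_mult [tendsto_intros]:
  fixes f :: "'b \<Rightarrow> 'a::real_normed_algebra_1^'n^'m" and g :: "'b \<Rightarrow> 'a^'p^'n"
  assumes "(f \<longlongrightarrow> A) F" "(g \<longlongrightarrow> B) F"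
  shows "((\<lambda>x. f x ** g x) \<longlongrightarrow> A ** B) F"
  unfolding matrix_matrix_mult_def
  by (intro vec_tendstoI) (simp, intro tendsto_intros assms)

lemma tendsto_mpow [tendsto_intros]:
  assumes "(f \<longlongrightarrow> A) F"
  shows "((\<lambda>x. mpow (f x) k) \<longlongrightarrow> mpow A k) F"
  by (induction k) (simp_all add: tendsto_matrix_matrix_mult assms)

lemma tendsto_det [tendsto_intros]:
  fixes f :: "'b \<Rightarrow> 'a::real_normed_field^'n^'n"
  assumes "(f \<longlongrightarrow> A) F"
  shows "((\<lambda>x. det (f x)) \<longlongrightarrow> det A) F"
  unfolding det_def by (intro tendsto_intros assms)

lemma tendsto_trace [tendsto_intros]:
  fixes f :: "'b \<Rightarrow> 'a::real_normed_algebra_1^'n^'n"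
  assumes "(f \<longlongrightarrow> A) F"
  shows "((\<lambda>x. trace (f x)) \<longlongrightarrow> trace A) F"
  unfolding trace_def by (intro tendsto_intros assms)

lemma column_matrix_matrix_mult: "column j (A ** B) = A *v column j B"
  by (simp add: column_def matrix_matrix_mult_def matrix_vector_mult_def)

lemma matrix_inv_nth:
  fixes A :: "'a::field^'n^'n"
  assumes "det A \<noteq> 0"
  shows "matrix_inv A $ i $ j = det (\<chi> r c. if c = i then mat 1 $ r $ j else A $ r $ c) / det A"
proof -
  have "invertible A" using assms invertible_det_nz by blast
  then have "A ** matrix_inv A = mat 1"
    unfolding invertible_def matrix_inv_def by (rule someI2_ex) blast
  then have "A *v column j (matrix_inv A) = column j (mat 1)"
    by (metis column_matrix_matrix_mult)
  then have "column j (matrix_inv A) = (\<chi> k. det (\<chi> r c. if c = k then column j (mat 1) $ r else A $ r $ c) / det A)"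
    using cramer[OF assms] by blast
  then have "column j (matrix_inv A) $ i = det (\<chi> r c. if c = i then column j (mat 1) $ r else A $ r $ c) / det A"
    by simp
  then show ?thesis
    by (simp only: column_def vec_lambda_beta)
qed

lemma tendsto_matrix_inv [tendsto_intros]:
  fixes f :: "'b \<Rightarrow> 'a::real_normed_field^'n^'n"
  assumes f: "(f \<longlongrightarrow> A) F" and A: "det A \<noteq> 0"
  shows "((\<lambda>x. matrix_inv (f x)) \<longlongrightarrow> matrix_inv A) F"
proof (intro vec_tendstoI)
  fix i j
  have "((\<lambda>x. det (\<chi> r c. if c = i then mat 1 $ r $ j else f x $ r $ c) / det (f x))
      \<longlongrightarrow> det (\<chi> r c. if c = i then mat 1 $ r $ j else A $ r $ c) / det A) F"
  proof (intro tendsto_divide tendsto_det[OF f] A tendsto_det vec_tendstoI)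
    fix r c
    show "((\<lambda>x. (\<chi> r c. if c = i then mat 1 $ r $ j else f x $ r $ c) $ r $ c) \<longlongrightarrow>
        (\<chi> r c. if c = i then mat 1 $ r $ j else A $ r $ c) $ r $ c) F"
      by (simp add: tendsto_vec_nth f)
  qed
  moreover have "\<forall>\<^sub>F x in F. det (f x) \<noteq> 0"
    using tendsto_imp_eventually_ne[OF tendsto_det[OF f] A] .
  then have "\<forall>\<^sub>F x in F. det (\<chi> r c. if c = i then mat 1 $ r $ j else f x $ r $ c) / det (f x)
                            = matrix_inv (f x) $ i $ j"
    by eventually_elim (simp add: matrix_inv_nth)
  ultimately show "((\<lambda>x. matrix_inv (f x) $ i $ j) \<longlongrightarrow> matrix_inv A $ i $ j) F"
    unfolding matrix_inv_nth[OF A] by (rule Lim_transform_eventually)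
qed

lemma continuous_on_det: "continuous_on UNIV (det :: 'a::real_normed_field^'n^'n \<Rightarrow> 'a)"
  unfolding continuous_on_def by (intro ballI tendsto_det tendsto_ident_at)

lemma continuous_on_trace: "continuous_on UNIV (trace :: 'a::real_normed_algebra_1^'n^'n \<Rightarrow> 'a)"
  unfolding continuous_on_def by (intro ballI tendsto_trace tendsto_ident_at)

lemma continuous_on_matrix_matrix_mult:
  "continuous_on UNIV (\<lambda>p :: ('a::real_normed_algebra_1^'n^'m) \<times> ('a^'p^'n). fst p ** snd p)"
  unfolding continuous_on_def
  by (intro ballI tendsto_matrix_matrix_mult tendsto_fst tendsto_snd tendsto_ident_at)

lemma continuous_on_matrix_inv:
  "continuous_on {A :: 'a::real_normed_field^'n^'n. det A \<noteq> 0} matrix_inv"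
  unfolding continuous_on_def by (intro ballI tendsto_matrix_inv tendsto_ident_at) simp

lemma matrix_inv_singular:
  fixes A :: "'a::field^'n^'n"
  assumes "det A = 0"
  shows "matrix_inv A = matrix_inv (mat 0)"
proof -
  have "\<not> invertible A" "\<not> invertible (mat 0 :: 'a^'n^'n)"
    using assms det_0 by (metis invertible_det_nz)+
  then show ?thesis
    unfolding invertible_def matrix_inv_def by metis
qed

lemma borel_measurable_det [measurable]:
  fixes f :: "'b \<Rightarrow> 'a::{real_normed_field, euclidean_space}^'n^'n"
  shows "f \<in> borel_measurable M \<Longrightarrow> (\<lambda>x. det (f x)) \<in> borel_measurable M"
  by (rule borel_measurable_continuous_on[OF continuous_on_det])

lemma borel_measurable_trace [measurable]:
  fixes f :: "'b \<Rightarrow> 'a::{real_normed_algebra_1, euclidean_space}^'n^'n"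
  shows "f \<in> borel_measurable M \<Longrightarrow> (\<lambda>x. trace (f x)) \<in> borel_measurable M"
  by (rule borel_measurable_continuous_on[OF continuous_on_trace])

lemma borel_measurable_matrix_matrix_mult [measurable]:
  fixes f :: "'b \<Rightarrow> 'a::{real_normed_algebra_1, euclidean_space}^'n^'m"
    and g :: "'b \<Rightarrow> 'a^'p^'n"
  assumes "f \<in> borel_measurable M" "g \<in> borel_measurable M"
  shows "(\<lambda>x. f x ** g x) \<in> borel_measurable M"
  by (rule borel_measurable_continuous_Pair[where H="(**)", OF assms continuous_on_matrix_matrix_mult])

lemma borel_measurable_mpow [measurable]:
  "f \<in> borel_measurable M \<Longrightarrow> (\<lambda>x. mpow (f x) k) \<in> borel_measurable M"
  by (induction k) simp_all

lemma borel_measurable_matrix_inv [measurable]: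
  fixes f :: "'b \<Rightarrow> 'a::{real_normed_field, euclidean_space}^'n^'n"
  assumes f: "f \<in> borel_measurable M"
  shows "(\<lambda>x. matrix_inv (f x)) \<in> borel_measurable M"
proof -
  \<comment> \<open>\<open>matrix_inv\<close> takes one unspecified value on all singular matrices\<close>
  let ?S = "{A :: 'a^'n^'n. det A \<noteq> 0}"
  have "open ?S"
    by (rule open_Collect_neq[OF continuous_on_det continuous_on_const])
  then have "(\<lambda>A. if A \<in> ?S then matrix_inv A else matrix_inv (mat 0)) \<in> borel_measurable borel"
    by (intro borel_measurable_continuous_on_if borel_open continuous_on_matrix_inv continuous_on_const)
  also have "(\<lambda>A. if A \<in> ?S then matrix_inv A else matrix_inv (mat 0)) = matrix_inv"
    by (auto simp: matrix_inv_singular)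
  finally show ?thesis
    using measurable_compose[OF f] by blast
qed

lemma borel_measurable_vec_lambda:
  fixes f :: "'n::finite \<Rightarrow> 'a \<Rightarrow> 'b::euclidean_space"
  assumes "\<And>i. f i \<in> borel_measurable M"
  shows "(\<lambda>x. \<chi> i. f i x) \<in> borel_measurable M"
proof (subst borel_measurable_euclidean_space, intro ballI)
  fix b :: "'b^'n" assume "b \<in> Basis"
  then obtain i u where "u \<in> Basis" "b = axis i u"
    unfolding Basis_vec_def by auto
  then show "(\<lambda>x. (\<chi> i. f i x) \<bullet> b) \<in> borel_measurable M"
    using assms[of i] by (simp add: inner_axis)
qed

section \<open>The integrand of the dual function\<close>

lemma Qfun_nth:
  "Qfun \<Lambda> Q \<theta> $ i $ j = (\<Sum>k\<in>\<Lambda>. exp (- \<i> * complex_of_real (kdot k \<theta>)) * Q k $ i $ j)"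
  by (simp add: Qfun_def cscale_def)

lemma tendsto_kdot: "(\<theta>s \<longlongrightarrow> \<theta>) F \<Longrightarrow> ((\<lambda>x. kdot k (\<theta>s x)) \<longlongrightarrow> kdot k \<theta>) F"
  unfolding kdot_def by (intro tendsto_sum tendsto_mult_left tendsto_vec_nth)

lemma tendsto_Qfun:
  assumes "\<forall>k\<in>\<Lambda>. ((\<lambda>x. Qs x k) \<longlongrightarrow> Q k) F" and "(\<theta>s \<longlongrightarrow> \<theta>) F"
  shows "((\<lambda>x. Qfun \<Lambda> (Qs x) (\<theta>s x)) \<longlongrightarrow> Qfun \<Lambda> Q \<theta>) F"
proof (intro vec_tendstoI)
  fix i j
  show "((\<lambda>x. Qfun \<Lambda> (Qs x) (\<theta>s x) $ i $ j) \<longlongrightarrow> Qfun \<Lambda> Q \<theta> $ i $ j) F"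
    unfolding Qfun_nth
    by (intro tendsto_sum tendsto_mult tendsto_exp tendsto_mult_left tendsto_of_real tendsto_kdot
        tendsto_vec_nth) (use assms in auto)
qed

lemma continuous_on_Qfun: "continuous_on UNIV (Qfun \<Lambda> Q)"
  unfolding continuous_on_def by (intro ballI tendsto_Qfun tendsto_const tendsto_ident_at)

lemma tendsto_pairing:
  assumes "\<forall>k\<in>\<Lambda>. (\<lambda>n. Qs n k) \<longlonglongrightarrow> Q k"
  shows "(\<lambda>n. pairing \<Lambda> (Qs n) \<Sigma>) \<longlonglongrightarrow> pairing \<Lambda> Q \<Sigma>"
  unfolding pairing_def
  by (intro tendsto_const tendsto_Re tendsto_sum tendsto_trace tendsto_matrix_matrix_mult) (use assms in auto)

lemma borel_measurable_Jintegrand: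
  assumes "\<Psi> \<in> borel_measurable borel"
  shows "Jintegrand \<nu> \<Lambda> \<Psi> Q \<in> borel_measurable borel"
  using assms borel_measurable_continuous_onI[OF continuous_on_Qfun]
  unfolding Jintegrand_def Let_def by measurable

lemma Jintegrand_nonsingular:
  fixes \<Lambda> :: "(int^'d) set"
  assumes "det (matrix_inv (\<Psi> \<theta>) + (1 / real \<nu>) *\<^sub>R Qfun \<Lambda> Q \<theta>) \<noteq> 0"
  shows "Jintegrand \<nu> \<Lambda> \<Psi> Q \<theta> = 1 / (2 * pi) ^ CARD('d) *
    Re (trace (mpow (matrix_inv (\<Psi> \<theta>) ** matrix_inv (matrix_inv (\<Psi> \<theta>) + (1 / real \<nu>) *\<^sub>R Qfun \<Lambda> Q \<theta>)) (\<nu> - 1)))"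
  unfolding Jintegrand_def Let_def using assms by (rule if_not_P)

lemma tendsto_Jintegrand:
  fixes \<Lambda> :: "(int^'d) set"
  assumes conv: "\<forall>k\<in>\<Lambda>. (\<lambda>n. Qs n k) \<longlonglongrightarrow> Q k"
    and nonsingular: "det (matrix_inv (\<Psi> \<theta>) + (1 / real \<nu>) *\<^sub>R Qfun \<Lambda> Q \<theta>) \<noteq> 0"
  shows "(\<lambda>n. Jintegrand \<nu> \<Lambda> \<Psi> (Qs n) \<theta>) \<longlonglongrightarrow> Jintegrand \<nu> \<Lambda> \<Psi> Q \<theta>"
proof -
  let ?M = "\<lambda>Q. matrix_inv (\<Psi> \<theta>) + (1 / real \<nu>) *\<^sub>R Qfun \<Lambda> Q \<theta>"
  have M: "(\<lambda>n. ?M (Qs n)) \<longlonglongrightarrow> ?M Q"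
    by (intro tendsto_add tendsto_const tendsto_scaleR tendsto_Qfun conv)
  have "\<forall>\<^sub>F n in sequentially. det (?M (Qs n)) \<noteq> 0"
    using tendsto_imp_eventually_ne[OF tendsto_det[OF M] nonsingular] .
  then have "\<forall>\<^sub>F n in sequentially. 1 / (2 * pi) ^ CARD('d) *
      Re (trace (mpow (matrix_inv (\<Psi> \<theta>) ** matrix_inv (?M (Qs n))) (\<nu> - 1))) = Jintegrand \<nu> \<Lambda> \<Psi> (Qs n) \<theta>"
    by eventually_elim (rule Jintegrand_nonsingular[symmetric])
  moreover have "(\<lambda>n. 1 / (2 * pi) ^ CARD('d) *
      Re (trace (mpow (matrix_inv (\<Psi> \<theta>) ** matrix_inv (?M (Qs n))) (\<nu> - 1)))) \<longlonglongrightarrow> Jintegrand \<nu> \<Lambda> \<Psi> Q \<theta>"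
    unfolding Jintegrand_nonsingular[where \<Psi>=\<Psi> and \<theta>=\<theta>, OF nonsingular]
    by (intro tendsto_mult_left tendsto_Re tendsto_trace tendsto_mpow
        tendsto_matrix_matrix_mult[OF tendsto_const] tendsto_matrix_inv[OF M nonsingular])
  ultimately show ?thesis
    by (rule Lim_transform_eventually[rotated])
qed

lemma ennreal_Jintegrand_le_liminf:
  assumes "\<forall>k\<in>\<Lambda>. (\<lambda>n. Qs n k) \<longlonglongrightarrow> Q k"
  shows "ennreal (Jintegrand \<nu> \<Lambda> \<Psi> Q \<theta>) \<le> liminf (\<lambda>n. ennreal (Jintegrand \<nu> \<Lambda> \<Psi> (Qs n) \<theta>))"
proof (cases "det (matrix_inv (\<Psi> \<theta>) + (1 / real \<nu>) *\<^sub>R Qfun \<Lambda> Q \<theta>) = 0")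
  case True
  then show ?thesis by (simp add: Jintegrand_def)
next
  case False
  then have "(\<lambda>n. ennreal (Jintegrand \<nu> \<Lambda> \<Psi> (Qs n) \<theta>)) \<longlonglongrightarrow> ennreal (Jintegrand \<nu> \<Lambda> \<Psi> Q \<theta>)"
    by (intro tendsto_ennrealI tendsto_Jintegrand assms)
  then have "liminf (\<lambda>n. ennreal (Jintegrand \<nu> \<Lambda> \<Psi> (Qs n) \<theta>)) = ennreal (Jintegrand \<nu> \<Lambda> \<Psi> Q \<theta>)"
    by (intro lim_imp_Liminf) simp_all
  then show ?thesis by simp
qed

lemma sets_borel_torus [measurable]: "torus \<in> sets borel"
  unfolding torus_def by measurable

section \<open>Zero sets of trigonometric polynomials\<close>

(* With v = (N ^ e j)_j for an injective e, the differences of the values are values at N of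
   nonzero integer polynomials; it suffices to pick N outside their finitely many roots. *)
lemma ex_int_vector_inj_on_dot:
  fixes F :: "(int^'d) set"
  assumes "finite F"
  obtains v :: "int^'d" where "inj_on (\<lambda>k. \<Sum>j\<in>UNIV. k $ j * v $ j) F"
proof -
  obtain e :: "'d \<Rightarrow> nat" where e: "inj e"
    using countableE[OF countable_finite[of "UNIV :: 'd set"]] by blast
  define p :: "int^'d \<Rightarrow> int poly" where "p \<delta> = (\<Sum>j\<in>UNIV. monom (\<delta> $ j) (e j))" for \<delta>
  have poly_p: "poly (p \<delta>) N = (\<Sum>j\<in>UNIV. \<delta> $ j * N ^ e j)" for \<delta> N
    by (simp add: p_def poly_sum poly_monom)
  have p_nonzero: "p \<delta> \<noteq> 0" if "\<delta> \<noteq> 0" for \<delta>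
  proof -
    obtain j0 where j0: "\<delta> $ j0 \<noteq> 0"
      using \<open>\<delta> \<noteq> 0\<close> by (auto simp: vec_eq_iff)
    have "coeff (p \<delta>) (e j0) = (\<Sum>j\<in>UNIV. if j = j0 then \<delta> $ j else 0)"
      unfolding p_def coeff_sum coeff_monom using e by (intro sum.cong) (auto simp: inj_eq)
    then show ?thesis using j0 by auto
  qed
  define D where "D = (\<lambda>(k, k'). k - k') ` ((F \<times> F) - {(k, k'). k = k'})"
  have "finite D" unfolding D_def using assms by blast
  moreover have "p \<delta> \<noteq> 0" if "\<delta> \<in> D" for \<delta>
    using that p_nonzero unfolding D_def by auto
  ultimately have "finite (\<Union>\<delta>\<in>D. {N. poly (p \<delta>) N = 0})"
    using poly_roots_finite by blast
  then obtain N :: int where N: "N \<notin> (\<Union>\<delta>\<in>D. {N. poly (p \<delta>) N = 0})"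
    using ex_new_if_finite[OF infinite_UNIV_int] by blast
  show ?thesis
  proof
    show "inj_on (\<lambda>k. \<Sum>j\<in>UNIV. k $ j * (\<chi> j. N ^ e j) $ j) F"
    proof (rule inj_onI, rule ccontr)
      fix k k' assume kk': "k \<in> F" "k' \<in> F" "k \<noteq> k'"
        and eq: "(\<Sum>j\<in>UNIV. k $ j * (\<chi> j. N ^ e j) $ j) = (\<Sum>j\<in>UNIV. k' $ j * (\<chi> j. N ^ e j) $ j)"
      have "k - k' \<in> D" unfolding D_def using kk' by force
      moreover have "poly (p (k - k')) N = 0"
        using eq by (simp add: poly_p left_diff_distrib sum_subtractf)
      ultimately show False using N by blast
    qed
  qed
qed

lemma countable_exp_i_eq: "countable {t::real. exp (\<i> * complex_of_real t) = z}"
proof (cases "\<exists>t0. exp (\<i> * complex_of_real t0) = z")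
  case True
  then obtain t0 where t0: "exp (\<i> * complex_of_real t0) = z" by blast
  have "{t. exp (\<i> * complex_of_real t) = z} \<subseteq> range (\<lambda>n::int. t0 + 2 * pi * of_int n)"
  proof
    fix t assume "t \<in> {t. exp (\<i> * complex_of_real t) = z}"
    then have "exp (\<i> * complex_of_real t) = exp (\<i> * complex_of_real t0)"
      using t0 by simp
    then obtain n :: int
      where "\<i> * complex_of_real t = \<i> * complex_of_real t0 + complex_of_real (of_int (2 * n) * pi) * \<i>"
      unfolding exp_eq by blast
    then have "\<i> * complex_of_real t = \<i> * complex_of_real (t0 + 2 * pi * of_int n)"
      by (simp add: algebra_simps)
    then have "t = t0 + 2 * pi * of_int n"
      by (simp only: mult_cancel_left complex_i_not_zero of_real_eq_iff simp_thms)
    then show "t \<in> range (\<lambda>n::int. t0 + 2 * pi * of_int n)"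
      by blast
  qed
  then show ?thesis by (rule countable_subset) simp
qed simp

(* Shifting all frequencies by N turns the sum into a unit times a polynomial in e^{it}. *)
lemma countable_zeros_exp_sum:
  fixes n :: "'k \<Rightarrow> int" and a :: "'k \<Rightarrow> complex"
  assumes F: "finite F" and n: "inj_on n F" and k0: "k0 \<in> F" "a k0 \<noteq> 0"
  shows "countable {t::real. (\<Sum>k\<in>F. a k * exp (\<i> * complex_of_real (t * of_int (n k)))) = 0}"
proof -
  define N where "N = (\<Sum>k\<in>F. \<bar>n k\<bar>)"
  define m where "m k = nat (n k + N)" for k
  define P where "P = (\<Sum>k\<in>F. monom (a k) (m k))"
  have m: "int (m k) = n k + N" if "k \<in> F" for k
    using member_le_sum[of k F "\<lambda>k. \<bar>n k\<bar>"] F that unfolding m_def N_def by simp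
  have "inj_on m F"
  proof (rule inj_onI)
    fix k k' assume "k \<in> F" "k' \<in> F" "m k = m k'"
    then have "n k = n k'"
      using m by (metis add_right_cancel)
    then show "k = k'"
      using inj_onD[OF n] \<open>k \<in> F\<close> \<open>k' \<in> F\<close> by blast
  qed
  have sum_eq: "(\<Sum>k\<in>F. a k * exp (\<i> * complex_of_real (t * of_int (n k))))
      = exp (- \<i> * complex_of_real t * of_int N) * poly P (exp (\<i> * complex_of_real t))" for t
  proof -
    have "exp (\<i> * complex_of_real (t * of_int (n k)))
        = exp (- \<i> * complex_of_real t * of_int N) * exp (\<i> * complex_of_real t) ^ m k" if "k \<in> F" for k
    proof -
      have "exp (\<i> * complex_of_real t) ^ m k = exp (of_int (n k + N) * (\<i> * complex_of_real t))"
        by (metis exp_of_nat_mult m[OF that] of_int_of_nat_eq)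
      then show ?thesis
        by (simp add: exp_add[symmetric] algebra_simps)
    qed
    then show ?thesis
      by (simp add: P_def poly_sum poly_monom sum_distrib_left mult_ac)
  qed
  have "coeff P (m k0) = (\<Sum>k\<in>F. if k = k0 then a k else 0)"
    unfolding P_def coeff_sum coeff_monom
    using \<open>inj_on m F\<close> k0 by (intro sum.cong) (auto dest: inj_onD)
  then have "P \<noteq> 0"
    using F k0 by auto
  then have "finite {z. poly P z = 0}"
    by (rule poly_roots_finite)
  then have "countable (\<Union>z\<in>{z. poly P z = 0}. {t::real. exp (\<i> * complex_of_real t) = z})"
    by (intro countable_UN countable_finite countable_exp_i_eq) auto
  moreover have "{t. (\<Sum>k\<in>F. a k * exp (\<i> * complex_of_real (t * of_int (n k)))) = 0}
      \<subseteq> (\<Union>z\<in>{z. poly P z = 0}. {t::real. exp (\<i> * complex_of_real t) = z})"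
    unfolding sum_eq by auto
  ultimately show ?thesis
    by (rule countable_subset[rotated])
qed

(* Averaging the translates of Z along w over t in [0, 1] and applying Fubini. *)
lemma null_sets_lborel_if_line_sections_null:
  fixes Z :: "'a::euclidean_space set" and w :: 'a
  assumes Z [measurable]: "Z \<in> sets borel"
    and lines: "\<And>\<phi>. {t::real. \<phi> + t *\<^sub>R w \<in> Z} \<in> null_sets lborel"
  shows "Z \<in> null_sets lborel"
proof -
  have translate: "emeasure lborel Z = (\<integral>\<^sup>+ \<phi>. indicator Z (t *\<^sub>R w + \<phi>) \<partial>lborel)" for t
  proof -
    have "emeasure lborel Z = (\<integral>\<^sup>+ \<phi>. indicator Z \<phi> \<partial>distr lborel borel ((+) (t *\<^sub>R w)))"
      by (simp add: lborel_distr_plus)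
    also have "\<dots> = (\<integral>\<^sup>+ \<phi>. indicator Z (t *\<^sub>R w + \<phi>) \<partial>lborel)"
      by (subst nn_integral_distr) auto
    finally show ?thesis .
  qed
  have sections_null: "(\<integral>\<^sup>+ t. indicator Z (t *\<^sub>R w + \<phi>) * indicator {0..1::real} t \<partial>lborel) = 0" for \<phi>
  proof -
    have "(\<integral>\<^sup>+ t. indicator Z (t *\<^sub>R w + \<phi>) * indicator {0..1::real} t \<partial>lborel)
        \<le> (\<integral>\<^sup>+ t. indicator {t::real. \<phi> + t *\<^sub>R w \<in> Z} t \<partial>lborel)"
      by (intro nn_integral_mono) (auto simp: indicator_def add.commute)
    also have "\<dots> = 0"
      using lines[of \<phi>] by (subst nn_integral_indicator) auto
    finally show ?thesis
      by simp
  qed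
  have "emeasure lborel Z = (\<integral>\<^sup>+ t. emeasure lborel Z * indicator {0..1::real} t \<partial>lborel)"
    by (subst nn_integral_cmult_indicator) auto
  also have "\<dots> = (\<integral>\<^sup>+ t. (\<integral>\<^sup>+ \<phi>. indicator Z (t *\<^sub>R w + \<phi>) * indicator {0..1::real} t \<partial>lborel) \<partial>lborel)"
    by (intro nn_integral_cong) (subst nn_integral_multc, measurable, simp add: translate[symmetric])
  also have "\<dots> = (\<integral>\<^sup>+ \<phi>. (\<integral>\<^sup>+ t. indicator Z (t *\<^sub>R w + \<phi>) * indicator {0..1::real} t \<partial>lborel) \<partial>lborel)"
    by (rule lborel_pair.Fubini') measurable
  also have "\<dots> = 0"
    by (simp add: sections_null)
  finally show ?thesis
    by auto
qed

lemma trig_poly_cases: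
  assumes "trig_poly p"
  obtains F c where "finite F" "p = (\<lambda>\<theta>. \<Sum>k\<in>F. c k * exp (\<i> * complex_of_real (kdot k \<theta>)))"
  using assms unfolding trig_poly_def by fastforce

lemma borel_measurable_kdot [measurable]: "kdot k \<in> borel_measurable borel"
  unfolding kdot_def[abs_def] by measurable

lemma borel_measurable_trig_poly:
  "trig_poly p \<Longrightarrow> p \<in> borel_measurable borel"
  by (erule trig_poly_cases) (hypsubst, measurable)

lemma kdot_add_line:
  "kdot k (\<phi> + t *\<^sub>R (\<chi> j. real_of_int (v $ j))) = kdot k \<phi> + t * of_int (\<Sum>j\<in>UNIV. k $ j * v $ j)"
  unfolding kdot_def by (simp add: algebra_simps sum.distrib sum_distrib_left)

lemma trig_poly_zero_set_null:
  fixes q :: "real^'d \<Rightarrow> complex"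
  assumes q: "trig_poly q" and nonzero: "q \<theta>0 \<noteq> 0"
  shows "{\<theta>. q \<theta> = 0} \<in> null_sets lborel"
proof -
  obtain F c where F: "finite F" and q_eq: "q = (\<lambda>\<theta>. \<Sum>k\<in>F. c k * exp (\<i> * complex_of_real (kdot k \<theta>)))"
    using q by (rule trig_poly_cases)
  obtain k0 where k0: "k0 \<in> F" "c k0 \<noteq> 0"
    using nonzero unfolding q_eq by (metis (no_types, lifting) mult_eq_0_iff sum.neutral)
  obtain v :: "int^'d" where v: "inj_on (\<lambda>k. \<Sum>j\<in>UNIV. k $ j * v $ j) F"
    using ex_int_vector_inj_on_dot[OF F] .
  show ?thesis
  proof (rule null_sets_lborel_if_line_sections_null[where w = "\<chi> j. real_of_int (v $ j)"])
    show "{\<theta>. q \<theta> = 0} \<in> sets borel"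
      using borel_measurable_trig_poly[OF q] by measurable
    fix \<phi> :: "real^'d"
    have "countable {t::real. (\<Sum>k\<in>F. (c k * exp (\<i> * complex_of_real (kdot k \<phi>))) *
        exp (\<i> * complex_of_real (t * of_int (\<Sum>j\<in>UNIV. k $ j * v $ j)))) = 0}"
      using k0 by (intro countable_zeros_exp_sum F v) auto
    then show "{t::real. \<phi> + t *\<^sub>R (\<chi> j. real_of_int (v $ j)) \<in> {\<theta>. q \<theta> = 0}} \<in> null_sets lborel"
      by (intro countable_imp_null_set_lborel)
        (simp add: q_eq kdot_add_line distrib_left exp_add mult.assoc)
  qed
qed

lemma rational_on_torus_AE_eq_borel:
  fixes f :: "real^'d \<Rightarrow> complex"
  assumes "rational_on_torus f"
  obtains g where "g \<in> borel_measurable borel" "AE \<theta> in lborel. \<theta> \<in> torus \<longrightarrow> f \<theta> = g \<theta>"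
proof -
  obtain p q where p: "trig_poly p" and q: "trig_poly q" and "\<exists>\<theta>\<in>torus. q \<theta> \<noteq> 0"
    and f: "\<forall>\<theta>\<in>torus. q \<theta> \<noteq> 0 \<longrightarrow> f \<theta> = p \<theta> / q \<theta>"
    using assms unfolding rational_on_torus_def by blast
  then have "{\<theta>. q \<theta> = 0} \<in> null_sets lborel"
    using trig_poly_zero_set_null by blast
  then have "AE \<theta> in lborel. \<theta> \<in> torus \<longrightarrow> f \<theta> = p \<theta> / q \<theta>"
    using f by (auto dest: AE_not_in)
  moreover have "(\<lambda>\<theta>. p \<theta> / q \<theta>) \<in> borel_measurable borel"
    using borel_measurable_trig_poly[OF p] borel_measurable_trig_poly[OF q] by measurable
  ultimately show ?thesis
    using that by blast
qed

lemma rational_matrix_fun_AE_eq_borel: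
  fixes \<Psi> :: "real^'d \<Rightarrow> complex^'m^'m"
  assumes "rational_matrix_fun \<Psi>"
  obtains \<Phi> where "\<Phi> \<in> borel_measurable borel" "AE \<theta> in lborel. \<theta> \<in> torus \<longrightarrow> \<Psi> \<theta> = \<Phi> \<theta>"
proof -
  have "\<exists>g. g \<in> borel_measurable borel \<and> (AE \<theta> in lborel. \<theta> \<in> torus \<longrightarrow> \<Psi> \<theta> $ i $ j = g \<theta>)" for i j
  proof -
    have "rational_on_torus (\<lambda>\<theta>. \<Psi> \<theta> $ i $ j)"
      using assms unfolding rational_matrix_fun_def by blast
    then obtain g where "g \<in> borel_measurable borel" "AE \<theta> in lborel. \<theta> \<in> torus \<longrightarrow> \<Psi> \<theta> $ i $ j = g \<theta>"
      by (rule rational_on_torus_AE_eq_borel)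
    then show ?thesis
      by blast
  qed
  then have "\<exists>g. \<forall>i j. g i j \<in> borel_measurable borel \<and>
      (AE \<theta> in lborel. \<theta> \<in> torus \<longrightarrow> \<Psi> \<theta> $ i $ j = g i j \<theta>)"
    by (subst choice_iff[symmetric])+ blast
  then obtain g where g: "\<And>i j. g i j \<in> borel_measurable borel"
    and AE_g: "\<And>i j. AE \<theta> in lborel. \<theta> \<in> torus \<longrightarrow> \<Psi> \<theta> $ i $ j = g i j \<theta>"
    by blast
  show ?thesis
  proof
    show "(\<lambda>\<theta>. \<chi> i j. g i j \<theta>) \<in> borel_measurable borel"
      by (intro borel_measurable_vec_lambda g)
    have "AE \<theta> in lborel. \<forall>i j. \<theta> \<in> torus \<longrightarrow> \<Psi> \<theta> $ i $ j = g i j \<theta>"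
      by (intro eventually_all_finite AE_g)
    then show "AE \<theta> in lborel. \<theta> \<in> torus \<longrightarrow> \<Psi> \<theta> = (\<chi> i j. g i j \<theta>)"
      by eventually_elim (auto simp: vec_eq_iff)
  qed
qed

section \<open>Lower semicontinuity of the dual function\<close>

lemma Jnu_cong_AE:
  assumes "AE \<theta> in lborel. \<theta> \<in> torus \<longrightarrow> \<Psi> \<theta> = \<Phi> \<theta>"
  shows "Jnu \<nu> \<Lambda> \<Sigma> \<Psi> Q = Jnu \<nu> \<Lambda> \<Sigma> \<Phi> Q"
proof -
  have "AE \<theta> in lborel. ennreal (Jintegrand \<nu> \<Lambda> \<Psi> Q \<theta>) * indicator torus \<theta>
                        = ennreal (Jintegrand \<nu> \<Lambda> \<Phi> Q \<theta>) * indicator torus \<theta>"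
    using assms by eventually_elim (simp add: Jintegrand_def Let_def indicator_def)
  then show ?thesis
    unfolding Jnu_def by (simp only: nn_integral_cong_AE)
qed

lemma nn_integral_Jintegrand_le_liminf:
  assumes \<Psi>: "\<Psi> \<in> borel_measurable borel" and conv: "\<forall>k\<in>\<Lambda>. (\<lambda>n. Qs n k) \<longlonglongrightarrow> Q k"
  shows "(\<integral>\<^sup>+ \<theta>. ennreal (Jintegrand \<nu> \<Lambda> \<Psi> Q \<theta>) * indicator torus \<theta> \<partial>lborel)
    \<le> liminf (\<lambda>n. \<integral>\<^sup>+ \<theta>. ennreal (Jintegrand \<nu> \<Lambda> \<Psi> (Qs n) \<theta>) * indicator torus \<theta> \<partial>lborel)"
proof -
  have "(\<integral>\<^sup>+ \<theta>. ennreal (Jintegrand \<nu> \<Lambda> \<Psi> Q \<theta>) * indicator torus \<theta> \<partial>lborel)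
      \<le> (\<integral>\<^sup>+ \<theta>. liminf (\<lambda>n. ennreal (Jintegrand \<nu> \<Lambda> \<Psi> (Qs n) \<theta>) * indicator torus \<theta>) \<partial>lborel)"
    by (intro nn_integral_mono) (simp add: indicator_def ennreal_Jintegrand_le_liminf[OF conv])
  also have "\<dots> \<le> liminf (\<lambda>n. \<integral>\<^sup>+ \<theta>. ennreal (Jintegrand \<nu> \<Lambda> \<Psi> (Qs n) \<theta>) * indicator torus \<theta> \<partial>lborel)"
  proof (intro nn_integral_liminf)
    have [measurable]: "torus \<in> sets lborel"
      by simp
    show "(\<lambda>\<theta>. ennreal (Jintegrand \<nu> \<Lambda> \<Psi> (Qs n) \<theta>) * indicator torus \<theta>) \<in> borel_measurable lborel" for n
      using borel_measurable_Jintegrand[OF \<Psi>] by measurable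
  qed
  finally show ?thesis .
qed

lemma ereal_add_mult_le_liminf:
  fixes a :: "nat \<Rightarrow> real" and X :: "nat \<Rightarrow> ennreal"
  assumes a: "a \<longlonglongrightarrow> a0" and c: "0 \<le> c" and x: "x \<le> liminf X"
  shows "ereal a0 + ereal c * enn2ereal x \<le> liminf (\<lambda>n. ereal (a n) + ereal c * enn2ereal (X n))"
proof -
  have "ereal c * enn2ereal x \<le> ereal c * enn2ereal (liminf X)"
    using x c by (intro ereal_mult_left_mono) (simp_all add: less_eq_ennreal.rep_eq)
  also have "enn2ereal (liminf X) = liminf (\<lambda>n. enn2ereal (X n))"
    by (rule Liminf_compose_continuous_mono[symmetric])
      (auto simp: continuous_on_enn2ereal mono_def less_eq_ennreal.rep_eq)
  also have "ereal c * liminf (\<lambda>n. enn2ereal (X n)) = liminf (\<lambda>n. ereal c * enn2ereal (X n))"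
    by (rule Liminf_ereal_mult_left[symmetric]) (use c in auto)
  finally have "ereal a0 + ereal c * enn2ereal x \<le> ereal a0 + liminf (\<lambda>n. ereal c * enn2ereal (X n))"
    by (rule add_left_mono)
  also have "\<dots> = liminf (\<lambda>n. ereal (a n) + ereal c * enn2ereal (X n))"
    by (rule ereal_liminf_lim_add[symmetric]) (use a in auto)
  finally show ?thesis .
qed

lemma Jnu_le_liminf:
  assumes "\<Psi> \<in> borel_measurable borel" and "\<forall>k\<in>\<Lambda>. (\<lambda>n. Qs n k) \<longlonglongrightarrow> Q k"
  shows "Jnu \<nu> \<Lambda> \<Sigma> \<Psi> Q \<le> liminf (\<lambda>n. Jnu \<nu> \<Lambda> \<Sigma> \<Psi> (Qs n))"
proof -
  have "0 \<le> real \<nu> / (real \<nu> - 1)"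
    by (cases \<nu>) auto
  then show ?thesis
    unfolding Jnu_def
    by (intro ereal_add_mult_le_liminf tendsto_pairing nn_integral_Jintegrand_le_liminf assms)
qed

theorem lemma5p5:
  fixes \<nu> :: nat
    and \<Lambda> :: "(int^'d) set"
    and \<Sigma> :: "int^'d \<Rightarrow> complex^'m^'m"
    and \<Psi> :: "real^'d \<Rightarrow> complex^'m^'m"
  assumes "\<nu> \<ge> 2"
    and "finite \<Lambda>" and "0 \<in> \<Lambda>" and "\<forall>k\<in>\<Lambda>. - k \<in> \<Lambda>"
    and "\<forall>k\<in>\<Lambda>. \<Sigma> (- k) = cadj (\<Sigma> k)"
    and "rational_matrix_fun \<Psi>"
    and "bounded_coercive \<Psi>"
  shows "\<forall>Q\<in>Lplus \<nu> \<Lambda> \<Psi>. \<forall>Qs::nat \<Rightarrow> int^'d \<Rightarrow> complex^'m^'m.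
           (\<forall>n. Qs n \<in> Lplus \<nu> \<Lambda> \<Psi>) \<longrightarrow> (\<forall>k\<in>\<Lambda>. (\<lambda>n. Qs n k) \<longlonglongrightarrow> Q k) \<longrightarrow>
           Jnu \<nu> \<Lambda> \<Sigma> \<Psi> Q \<le> liminf (\<lambda>n. Jnu \<nu> \<Lambda> \<Sigma> \<Psi> (Qs n))"
proof (intro ballI allI impI)
  fix Q and Qs :: "nat \<Rightarrow> int^'d \<Rightarrow> complex^'m^'m"
  assume conv: "\<forall>k\<in>\<Lambda>. (\<lambda>n. Qs n k) \<longlonglongrightarrow> Q k"
  obtain \<Phi> where \<Phi>: "\<Phi> \<in> borel_measurable borel" and AE_eq: "AE \<theta> in lborel. \<theta> \<in> torus \<longrightarrow> \<Psi> \<theta> = \<Phi> \<theta>"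
    using \<open>rational_matrix_fun \<Psi>\<close> by (rule rational_matrix_fun_AE_eq_borel)
  show "Jnu \<nu> \<Lambda> \<Sigma> \<Psi> Q \<le> liminf (\<lambda>n. Jnu \<nu> \<Lambda> \<Sigma> \<Psi> (Qs n))"
    unfolding Jnu_cong_AE[OF AE_eq] using Jnu_le_liminf[OF \<Phi> conv] .
qed

end
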